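(* Let $\sigma$ be a permutation of $\{1,\ldots,n\}$ with $\sigma(i)\neq i$ for all $i$. Then there exists a partition $U_1,U_2,U_3$ of $\{1,\ldots,n\}$ such that for each $j\in\{1,2,3\}$, $|U_j|\in[\frac{n}{4}-1,\frac{n}{2}+1]$ and $U_j\cap\sigma(U_j)=\emptyset$. *)

theory Defs
  imports Complex_Main "HOL-Combinatorics.Permutations"
begin

end

theory Submission
  imports Defs
begin

text \<open>
  We prove more: the functional graph of a fixed-point-free injective self-map \<sigma> of a finite set
  has a proper 3-colouring whose colour classes differ in size by at most one.  A 2-cycle or a 3-cycle of \<sigma> is removed, the rest coloured by induction, and
  the cycle gets the two least used colours, respectively all three colours.  Otherwise some
  cycle is x \<rightarrow> y \<rightarrow> z \<rightarrow> w with w \<noteq> x; splicing y and z out of it gives the shorter cycle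
  x \<rightarrow> w.  After colouring the spliced map, y and z receive the two least used colours, in the
  order compatible with the (distinct) colours of x and w.  Three classes whose sizes differ by
  at most one have sizes between (n - 2)/3 and (n + 2)/3.
\<close>

definition colour_count :: "('a \<Rightarrow> nat) \<Rightarrow> 'a set \<Rightarrow> nat \<Rightarrow> nat" where
  "colour_count c S i = card {v \<in> S. c v = i}"

definition balanced_3 :: "(nat \<Rightarrow> nat) \<Rightarrow> bool" where
  "balanced_3 f \<longleftrightarrow> (\<forall>i<3. \<forall>j<3. f i \<le> f j + 1)"

definition equitable_3_colouring :: "('a \<Rightarrow> 'a) \<Rightarrow> 'a set \<Rightarrow> ('a \<Rightarrow> nat) \<Rightarrow> bool" where
  "equitable_3_colouring \<sigma> S c \<longleftrightarrow>
     (\<forall>x\<in>S. c x < 3 \<and> c (\<sigma> x) \<noteq> c x) \<and> balanced_3 (colour_count c S)"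

lemma all_less_3_iff: "(\<forall>i<3. P i) \<longleftrightarrow> P 0 \<and> P 1 \<and> P (2::nat)"
  by (simp add: numeral_3_eq_3 numeral_2_eq_2 All_less_Suc2)

lemma balanced_3_add_all:
  "balanced_3 f \<Longrightarrow> balanced_3 (\<lambda>i. f i + of_bool (i = 0) + of_bool (i = 1) + of_bool (i = 2))"
  by (simp add: balanced_3_def all_less_3_iff)

lemma balanced_3_add_two:
  assumes "balanced_3 f"
  obtains j k where "j < 3" "k < 3" "j \<noteq> k"
    "balanced_3 (\<lambda>i. f i + of_bool (i = j) + of_bool (i = k))"
proof -
  have f: "f 0 \<le> f 1 + 1" "f 0 \<le> f 2 + 1" "f 1 \<le> f 0 + 1" "f 1 \<le> f 2 + 1"
    "f 2 \<le> f 0 + 1" "f 2 \<le> f 1 + 1"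
    using assms by (auto simp: balanced_3_def all_less_3_iff)
  \<comment> \<open>the two colours other than a most used one\<close>
  consider "f 1 \<le> f 0" "f 2 \<le> f 0" | "f 0 \<le> f 1" "f 2 \<le> f 1" | "f 0 \<le> f 2" "f 1 \<le> f 2"
    by linarith
  then show thesis
  proof cases
    case 1
    then show thesis using f by (intro that[of 1 2]) (auto simp: balanced_3_def all_less_3_iff)
  next
    case 2
    then show thesis using f by (intro that[of 0 2]) (auto simp: balanced_3_def all_less_3_iff)
  next
    case 3
    then show thesis using f by (intro that[of 0 1]) (auto simp: balanced_3_def all_less_3_iff)
  qed
qed

lemma balanced_3_sum_bounds:
  assumes "balanced_3 f" "f 0 + f 1 + f 2 = n" "i < 3"
  shows "n \<le> 3 * f i + 2" "3 * f i \<le> n + 2"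
proof -
  have "i = 0 \<or> i = 1 \<or> i = 2"
    using assms(3) by auto
  then show "n \<le> 3 * f i + 2" "3 * f i \<le> n + 2"
    using assms(1,2) by (auto simp: balanced_3_def all_less_3_iff)
qed

lemma colour_count_insert_upd:
  assumes "finite S" "x \<notin> S"
  shows "colour_count (c(x := j)) (insert x S) i = colour_count c S i + of_bool (i = j)"
proof -
  have "{v \<in> insert x S. (c(x := j)) v = i} =
        (if i = j then insert x {v \<in> S. c v = i} else {v \<in> S. c v = i})"
    using assms(2) by auto
  then show ?thesis
    using assms by (simp add: colour_count_def)
qed

lemma colour_count_sum:
  assumes "finite S" "\<forall>v\<in>S. c v < 3"
  shows "colour_count c S 0 + colour_count c S 1 + colour_count c S 2 = card S"
proof -
  have "S = (\<Union>i<3. {v \<in> S. c v = i})"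
    using assms(2) by auto
  also have "card \<dots> = (\<Sum>i<3. colour_count c S i)"
    unfolding colour_count_def by (rule card_UN_disjoint) (use assms(1) in auto)
  finally show ?thesis
    by (simp add: eval_nat_numeral)
qed

lemma self_map_Diff_invariant:
  assumes "inj_on \<sigma> S" "\<sigma> ` S \<subseteq> S" "finite C" "C \<subseteq> S" "\<sigma> ` C \<subseteq> C"
  shows "\<sigma> ` (S - C) \<subseteq> S - C"
proof -
  have "\<sigma> ` C = C"
    using assms by (meson endo_inj_surj inj_on_subset)
  show ?thesis
  proof
    fix u
    assume "u \<in> \<sigma> ` (S - C)"
    then obtain v where v: "v \<in> S" "v \<notin> C" "u = \<sigma> v"
      by auto
    have "\<sigma> v \<notin> \<sigma> ` C"
      using assms(1,4) v(1,2) by (auto dest: inj_onD)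
    then show "u \<in> S - C"
      using \<open>\<sigma> ` C = C\<close> assms(2) v by auto
  qed
qed

lemma splice_self_map:
  assumes "inj_on \<sigma> S" "\<sigma> ` S \<subseteq> S" "x \<in> S"
  defines "\<tau> \<equiv> \<sigma>(x := \<sigma> (\<sigma> x))"
  shows "\<tau> ` (S - {\<sigma> x}) \<subseteq> S - {\<sigma> x}" "inj_on \<tau> (S - {\<sigma> x})"
proof -
  have \<sigma>x: "\<sigma> x \<in> S"
    using assms by auto
  have ne: "\<sigma> v \<noteq> \<sigma> x" if "v \<in> S" "v \<noteq> x" for v
    using that assms(1,3) by (meson inj_onD)
  show "\<tau> ` (S - {\<sigma> x}) \<subseteq> S - {\<sigma> x}"
    using assms(2) \<sigma>x ne ne[OF \<sigma>x] by (auto simp: \<tau>_def)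
  show "inj_on \<tau> (S - {\<sigma> x})"
    using assms(1) \<sigma>x by (auto simp: \<tau>_def inj_on_def)
qed

lemma equitable_3_colouring_add_2cycle:
  assumes "finite S" "\<sigma> ` S \<subseteq> S" "x \<notin> S" "y \<notin> S" "x \<noteq> y" "\<sigma> x = y" "\<sigma> y = x"
    and "equitable_3_colouring \<sigma> S c"
  shows "\<exists>c'. equitable_3_colouring \<sigma> (insert x (insert y S)) c'"
proof -
  obtain j k where jk: "j < 3" "k < 3" "j \<noteq> k"
    and bal: "balanced_3 (\<lambda>i. colour_count c S i + of_bool (i = k) + of_bool (i = j))"
    using assms(8) unfolding equitable_3_colouring_def by (metis balanced_3_add_two)
  define c' where "c' = c(y := k, x := j)"
  have "colour_count c' (insert x (insert y S)) =
        (\<lambda>i. colour_count c S i + of_bool (i = k) + of_bool (i = j))"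
    using assms(1,3,4,5) by (simp add: fun_eq_iff c'_def colour_count_insert_upd)
  moreover have "\<forall>v\<in>insert x (insert y S). c' v < 3 \<and> c' (\<sigma> v) \<noteq> c' v"
    using assms jk by (auto simp: c'_def equitable_3_colouring_def image_subset_iff)
  ultimately show ?thesis
    using bal unfolding equitable_3_colouring_def by metis
qed

lemma equitable_3_colouring_add_3cycle:
  assumes "finite S" "\<sigma> ` S \<subseteq> S" "x \<notin> S" "y \<notin> S" "z \<notin> S" "x \<noteq> y" "x \<noteq> z" "y \<noteq> z"
    and "\<sigma> x = y" "\<sigma> y = z" "\<sigma> z = x" "equitable_3_colouring \<sigma> S c"
  shows "\<exists>c'. equitable_3_colouring \<sigma> (insert x (insert y (insert z S))) c'"
proof -
  define c' where "c' = c(z := 2, y := 1, x := 0)"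
  have "colour_count c' (insert x (insert y (insert z S))) =
        (\<lambda>i. colour_count c S i + of_bool (i = 0) + of_bool (i = 1) + of_bool (i = 2))"
    using assms(1-8) by (simp add: fun_eq_iff c'_def colour_count_insert_upd add_ac)
  moreover have "\<forall>v\<in>insert x (insert y (insert z S)). c' v < 3 \<and> c' (\<sigma> v) \<noteq> c' v"
    using assms by (auto simp: c'_def equitable_3_colouring_def image_subset_iff)
  ultimately show ?thesis
    using assms(12) balanced_3_add_all unfolding equitable_3_colouring_def by metis
qed

lemma equitable_3_colouring_unsplice:
  assumes "finite S" "x \<in> S" "y \<notin> S" "z \<notin> S" "y \<noteq> z" "\<sigma> x = y" "\<sigma> y = z"
    and "(\<sigma>(x := \<sigma> z)) ` S \<subseteq> S" "equitable_3_colouring (\<sigma>(x := \<sigma> z)) S c"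
  shows "\<exists>c'. equitable_3_colouring \<sigma> (insert y (insert z S)) c'"
proof -
  let ?f = "colour_count c S"
  obtain j k where jk: "j < 3" "k < 3" "j \<noteq> k"
    and bal: "balanced_3 (\<lambda>i. ?f i + of_bool (i = j) + of_bool (i = k))"
    using assms(9) unfolding equitable_3_colouring_def by (metis balanced_3_add_two)
  have cx: "c x < 3" "c (\<sigma> z) \<noteq> c x"
    using assms(2,9) unfolding equitable_3_colouring_def by force+
  \<comment> \<open>one of the two orders of j and k fits between the colours of x and \<sigma> z\<close>
  obtain p q where pq: "p \<noteq> c x" "q \<noteq> c (\<sigma> z)" "p \<noteq> q" "p < 3" "q < 3"
    and bal': "balanced_3 (\<lambda>i. ?f i + of_bool (i = q) + of_bool (i = p))"
  proof (cases "j \<noteq> c x \<and> k \<noteq> c (\<sigma> z)")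
    case True
    then show thesis
      using that[of j k] jk bal by (simp add: add_ac)
  next
    case False
    then show thesis
      using that[of k j] jk bal cx(2) by auto
  qed
  define c' where "c' = c(z := q, y := p)"
  have "\<sigma> z \<in> S"
    using assms(2,8) by auto
  have "colour_count c' (insert y (insert z S)) =
        (\<lambda>i. ?f i + of_bool (i = q) + of_bool (i = p))"
    using assms(1,3,4,5) by (simp add: fun_eq_iff c'_def colour_count_insert_upd)
  moreover have "\<forall>v\<in>insert y (insert z S). c' v < 3 \<and> c' (\<sigma> v) \<noteq> c' v"
  proof
    fix v
    assume v: "v \<in> insert y (insert z S)"
    consider "v = y" | "v = z" | "v = x" | "v \<in> S" "v \<noteq> x"
      using v by blast
    then show "c' v < 3 \<and> c' (\<sigma> v) \<noteq> c' v"
    proof cases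
      case 4
      then have "\<sigma> v \<in> S" "c (\<sigma> v) \<noteq> c v" "c v < 3"
        using assms(8,9) by (force simp: equitable_3_colouring_def)+
      then show ?thesis
        using 4 assms(3,4) by (auto simp: c'_def)
    qed (use assms pq cx \<open>\<sigma> z \<in> S\<close> in \<open>auto simp: c'_def\<close>)
  qed
  ultimately show ?thesis
    using bal' unfolding equitable_3_colouring_def by metis
qed

lemma derangement_equitable_3_colouring:
  assumes "finite S" "\<sigma> ` S \<subseteq> S" "inj_on \<sigma> S" "\<forall>x\<in>S. \<sigma> x \<noteq> x"
  shows "\<exists>c. equitable_3_colouring \<sigma> S c"
  using assms
proof (induction "card S" arbitrary: S \<sigma> rule: less_induct)
  case less
  note fin = less.prems(1) and self_map = less.prems(2) and inj = less.prems(3)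
    and no_fix = less.prems(4)
  have IH: "\<exists>c. equitable_3_colouring \<tau> S' c"
    if "S' \<subseteq> S - {y}" "y \<in> S" "\<tau> ` S' \<subseteq> S'" "inj_on \<tau> S'" "\<forall>v\<in>S'. \<tau> v \<noteq> v" for S' \<tau> y
  proof -
    have "card S' < card S"
      using that(1,2) fin by (meson Diff_subset card_mono card_Diff1_less finite_subset le_less_trans)
    then show ?thesis
      using less.hyps that(1,3-5) fin by (meson Diff_subset finite_subset)
  qed
  show ?case
  proof (cases "S = {}")
    case True
    then show ?thesis
      by (auto simp: equitable_3_colouring_def balanced_3_def colour_count_def)
  next
    case False
    then obtain x where x: "x \<in> S"
      by blast
    define y z w where "y = \<sigma> x" and "z = \<sigma> y" and "w = \<sigma> z"
    have y: "y \<in> S" "y \<noteq> x" and z: "z \<in> S" "z \<noteq> y"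
      using x self_map no_fix by (auto simp: y_def z_def image_subset_iff)
    consider (two) "z = x" | (three) "z \<noteq> x" "w = x" | (long) "z \<noteq> x" "w \<noteq> x"
      by blast
    then show ?thesis
    proof cases
      case two
      define S' where "S' = S - {x, y}"
      have "\<sigma> ` S' \<subseteq> S'"
        unfolding S'_def using inj self_map x y two
        by (intro self_map_Diff_invariant) (auto simp: y_def z_def)
      then obtain c where "equitable_3_colouring \<sigma> S' c"
        using IH[of S' y \<sigma>] y inj no_fix by (auto simp: S'_def intro: inj_on_subset)
      moreover have "S = insert x (insert y S')"
        using x y by (auto simp: S'_def)
      ultimately show ?thesis
        using equitable_3_colouring_add_2cycle[of S' \<sigma> x y c] fin \<open>\<sigma> ` S' \<subseteq> S'\<close> y two
        unfolding S'_def y_def z_def by simp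
    next
      case three
      define S' where "S' = S - {x, y, z}"
      have "\<sigma> ` S' \<subseteq> S'"
        unfolding S'_def using inj self_map x y z three
        by (intro self_map_Diff_invariant) (auto simp: y_def z_def w_def)
      then obtain c where "equitable_3_colouring \<sigma> S' c"
        using IH[of S' y \<sigma>] y inj no_fix by (auto simp: S'_def intro: inj_on_subset)
      moreover have "S = insert x (insert y (insert z S'))"
        using x y z by (auto simp: S'_def)
      ultimately show ?thesis
        using equitable_3_colouring_add_3cycle[of S' \<sigma> x y z c] fin \<open>\<sigma> ` S' \<subseteq> S'\<close> y z three
        unfolding S'_def y_def z_def w_def by simp
    next
      case long
      define S' where "S' = S - {y, z}"
      define \<tau> where "\<tau> = \<sigma>(x := w)"
      have "(\<sigma>(x := z)) ` (S - {y}) \<subseteq> S - {y}" "inj_on (\<sigma>(x := z)) (S - {y})"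
        using splice_self_map[OF inj self_map x] by (simp_all add: y_def z_def)
      from splice_self_map[OF this(2,1), of x]
      have "\<tau> ` S' \<subseteq> S'" "inj_on \<tau> S'"
        using x y long by (simp_all add: \<tau>_def S'_def w_def Diff_insert2[symmetric])
      moreover have "\<forall>v\<in>S'. \<tau> v \<noteq> v"
        using no_fix long by (auto simp: \<tau>_def S'_def)
      ultimately obtain c where "equitable_3_colouring \<tau> S' c"
        using IH[of S' y \<tau>] y by (auto simp: S'_def)
      moreover have "S = insert y (insert z S')"
        using y z by (auto simp: S'_def)
      ultimately show ?thesis
        using equitable_3_colouring_unsplice[of S' x y z \<sigma> c] fin \<open>\<tau> ` S' \<subseteq> S'\<close> x y z long
        unfolding S'_def \<tau>_def y_def z_def w_def by simp
    qed
  qed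
qed

lemma equitable_3_colouring_class_bounds:
  assumes "finite S" "equitable_3_colouring \<sigma> S c" "i < 3"
  shows "card S \<le> 3 * colour_count c S i + 2" "3 * colour_count c S i \<le> card S + 2"
proof -
  have "\<forall>v\<in>S. c v < 3" "balanced_3 (colour_count c S)"
    using assms(2) by (simp_all add: equitable_3_colouring_def)
  from balanced_3_sum_bounds[OF this(2) colour_count_sum[OF assms(1) this(1)] assms(3)]
  show "card S \<le> 3 * colour_count c S i + 2" "3 * colour_count c S i \<le> card S + 2" .
qed

theorem lemma5:
  fixes n :: nat and \<sigma> :: "nat \<Rightarrow> nat"
  assumes "\<sigma> permutes {1..n}"
    and "\<forall>i\<in>{1..n}. \<sigma> i \<noteq> i"
  shows "\<exists>U1 U2 U3. U1 \<union> U2 \<union> U3 = {1..n} \<and>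
           U1 \<inter> U2 = {} \<and> U1 \<inter> U3 = {} \<and> U2 \<inter> U3 = {} \<and>
           (\<forall>U\<in>{U1, U2, U3}.
              real n / 4 - 1 \<le> real (card U) \<and> real (card U) \<le> real n / 2 + 1 \<and>
              U \<inter> \<sigma> ` U = {})"
proof -
  have "\<exists>c. equitable_3_colouring \<sigma> {1..n} c"
    using assms by (intro derangement_equitable_3_colouring) (simp_all add: permutes_image permutes_inj_on)
  then obtain c where c: "equitable_3_colouring \<sigma> {1..n} c"
    by blast
  define U where "U i = {v \<in> {1..n}. c v = i}" for i
  have cover: "U 0 \<union> U 1 \<union> U 2 = {1..n}"
    using c by (auto simp: U_def equitable_3_colouring_def less_Suc_eq numeral_3_eq_3)
  have colour_class: "real n / 4 - 1 \<le> real (card (U i)) \<and> real (card (U i)) \<le> real n / 2 + 1 \<and>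
      U i \<inter> \<sigma> ` U i = {}" if "i < 3" for i
  proof -
    have "n \<le> 3 * card (U i) + 2" "3 * card (U i) \<le> n + 2"
      using equitable_3_colouring_class_bounds[OF _ c that] by (simp_all add: U_def colour_count_def)
    moreover have "U i \<inter> \<sigma> ` U i = {}"
      using c by (force simp: U_def equitable_3_colouring_def)
    ultimately show ?thesis
      by linarith
  qed
  have disjoint: "U i \<inter> U j = {}" if "i \<noteq> j" for i j
    using that by (auto simp: U_def)
  show ?thesis
    using cover disjoint colour_class[of 0] colour_class[of 1] colour_class[of 2]
    by (intro exI[of _ "U 0"] exI[of _ "U 1"] exI[of _ "U 2"]) simp
qed

end
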